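(* Let $\star$ be a state over time function satisfying axiom (E). Then $\star$ satisfies axiom (P) if and only if for all systems $A,B$, every $\mathcal{E}_{B|A}\in\mathfrak{C}(A,B)$ and every $\rho_A\in\mathfrak{S}(A)$, $$\mathcal{E}_{B|A}\star\rho_A=(\mathrm{id}_A\otimes\mathcal{E}_{B|A'})(\mathrm{id}_{A'|A}\star\rho_A).$$ Moreover, in this case $\star$ is process-linear, and $\star$ can be linearly extended to arbitrary linear maps $\mathcal{E}_{B|A}:\mathfrak{B}(A)\to\mathfrak{B}(B)$ (not necessarily channels) through this formula.
   Context: Systems are finite-dimensional Hilbert spaces; $\mathfrak{B}(A)$ linear operators, $\mathfrak{S}(A)$ density operators, $\mathfrak{C}(A,B)$ quantum channels (CPTP maps $\mathfrak{B}(A)\to\mathfrak{B}(B)$). $A'$ is a copy of $A$ (isomorphic systems identified), $\mathrm{id}_{A'|A}$ the identity channel, and $\mathcal{E}_{B|A'}$ is the map $\mathcal{E}_{B|A}$ acting on the copy $A'$. A state over time function assigns to all systems $A,B$ a map $\star:\mathfrak{C}(A,B)\times\mathfrak{S}(A)\to\mathfrak{B}(A\otimes B)$, $(\mathcal{E},\rho)\mapsto\mathcal{E}_{B|A}\star\rho_A$, with $\mathrm{Tr}_A[\mathcal{E}\star\rho]=\mathcal{E}(\rho)$ and $\mathrm{Tr}_B[\mathcal{E}\star\rho]=\rho$, extended homogeneously by $(\lambda\mathcal{E})\star\rho=\mathcal{E}\star(\lambda\rho)=\lambda(\mathcal{E}\star\rho)$, $\lambda\in\mathbb{C}$. It is process-linear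 if linear in the first argument. A quantum state over spacetime on $A\otimes E$ is either a density operator on $A\otimes E$ or an operator of the form $\mathcal{F}\star\sigma$. Axiom (E): for all systems $A,B,E$, every quantum state over spacetime $\rho_{AE}$ and every channel $\mathcal{E}_{B|A}$, an operator $\mathcal{E}_{B|A}\star\rho_{AE}$ on $A\otimes B\otimes E$ is defined such that for every completely positive trace-non-increasing map $\mathcal{I}_E$ on $E$, $\mathcal{I}_E[\mathcal{E}\star\rho_{AE}]=\mathcal{E}\star\mathcal{I}_E(\rho_{AE})$, and $\mathrm{Tr}_A[\mathcal{E}\star\rho_{AE}]=(\mathcal{E}\otimes\mathrm{id}_E)(\rho_{AE})$. Axiom (P): for all channels $\mathcal{E}_{B|A}$, $\mathcal{F}_{C|B}$ and states $\rho_A$, $\mathrm{Tr}_B[\mathcal{F}_{C|B}\star(\mathcal{E}_{B|A}\star\rho_A)]=(\mathcal{F}\circ\mathcal{E})_{C|A}\star\rho_A$, where $\mathcal{F}_{C|B}\star(\cdot)$ acts on the $B$-part of the state over spacetime on $A\otimes B$ with $A$ as spectator system as in axiom (E). *)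

theory Defs
  imports "Jordan_Normal_Form.Matrix"
begin

text \<open>Systems are identified with their (finite) dimension n; operators on a system of
dimension n are complex n x n matrices (basis-dependent representation of B(C^n)).
The tensor product C^a (x) C^b is identified with C^(a*b) via the index map (i,j) |-> i*b + j.
Linear maps B(A) -> B(B) are HOL functions on matrices, only their behaviour on
carrier_mat a a matters.\<close>

type_synonym cmat = "complex mat"
type_synonym qmap = "complex mat \<Rightarrow> complex mat"

definition trace :: "cmat \<Rightarrow> complex" where
  "trace A = (\<Sum>i<dim_row A. A $$ (i, i))"

definition psd :: "nat \<Rightarrow> cmat \<Rightarrow> bool" where
  "psd n A \<longleftrightarrow> A \<in> carrier_mat n n \<and>
     (\<forall>v :: nat \<Rightarrow> complex.
        Im (\<Sum>i<n. \<Sum>j<n. cnj (v i) * A $$ (i, j) * v j) = 0 \<and>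
        Re (\<Sum>i<n. \<Sum>j<n. cnj (v i) * A $$ (i, j) * v j) \<ge> 0)"

definition density :: "nat \<Rightarrow> cmat \<Rightarrow> bool" where
  "density n \<rho> \<longleftrightarrow> psd n \<rho> \<and> trace \<rho> = 1"

definition ptrace_left :: "nat \<Rightarrow> nat \<Rightarrow> cmat \<Rightarrow> cmat" where
  "ptrace_left a b M = mat b b (\<lambda>(i, j). \<Sum>k<a. M $$ (k * b + i, k * b + j))"

definition ptrace_right :: "nat \<Rightarrow> nat \<Rightarrow> cmat \<Rightarrow> cmat" where
  "ptrace_right a b M = mat a a (\<lambda>(i, j). \<Sum>k<b. M $$ (i * b + k, j * b + k))"

definition swap_sys :: "nat \<Rightarrow> nat \<Rightarrow> cmat \<Rightarrow> cmat" where
  "swap_sys a b M = mat (b * a) (b * a)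
     (\<lambda>(i, j). M $$ ((i mod a) * b + i div a, (j mod a) * b + j div a))"

text \<open>(F (x) id_E) applied to M on In (x) E, F : B(In) -> B(Out); result on Out (x) E.
 Defined block-wise, which is the (unique) linear extension for linear F.\<close>
definition apply_left :: "nat \<Rightarrow> nat \<Rightarrow> nat \<Rightarrow> qmap \<Rightarrow> cmat \<Rightarrow> cmat" where
  "apply_left din dout e F M = mat (dout * e) (dout * e)
     (\<lambda>(p, q). F (mat din din (\<lambda>(i, j). M $$ (i * e + p mod e, j * e + q mod e)))
                  $$ (p div e, q div e))"

text \<open>(id_E (x) F) applied to M on E (x) In; result on E (x) Out.\<close>
definition apply_right :: "nat \<Rightarrow> nat \<Rightarrow> nat \<Rightarrow> qmap \<Rightarrow> cmat \<Rightarrow> cmat" where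
  "apply_right e din dout F M = mat (e * dout) (e * dout)
     (\<lambda>(p, q). F (mat din din (\<lambda>(i, j). M $$ ((p div dout) * din + i, (q div dout) * din + j)))
                  $$ (p mod dout, q mod dout))"

definition linear_qmap :: "nat \<Rightarrow> nat \<Rightarrow> qmap \<Rightarrow> bool" where
  "linear_qmap din dout F \<longleftrightarrow>
     (\<forall>M \<in> carrier_mat din din. F M \<in> carrier_mat dout dout) \<and>
     (\<forall>M \<in> carrier_mat din din. \<forall>N \<in> carrier_mat din din. F (M + N) = F M + F N) \<and>
     (\<forall>M \<in> carrier_mat din din. \<forall>c. F (c \<cdot>\<^sub>m M) = c \<cdot>\<^sub>m F M)"

definition completely_positive :: "nat \<Rightarrow> nat \<Rightarrow> qmap \<Rightarrow> bool" where
  "completely_positive din dout F \<longleftrightarrow>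
     (\<forall>k M. psd (din * k) M \<longrightarrow> psd (dout * k) (apply_left din dout k F M))"

definition channel :: "nat \<Rightarrow> nat \<Rightarrow> qmap \<Rightarrow> bool" where
  "channel din dout F \<longleftrightarrow> linear_qmap din dout F \<and> completely_positive din dout F \<and>
     (\<forall>M \<in> carrier_mat din din. trace (F M) = trace M)"

definition cp_trace_nonincreasing :: "nat \<Rightarrow> nat \<Rightarrow> qmap \<Rightarrow> bool" where
  "cp_trace_nonincreasing din dout F \<longleftrightarrow> linear_qmap din dout F \<and> completely_positive din dout F \<and>
     (\<forall>M. psd din M \<longrightarrow> Re (trace (F M)) \<le> Re (trace M))"

text \<open>A state over time function: star a b F \<rho> is F_{B|A} \<star> \<rho>_A on A (x) B.
 The homogeneous extension to scalar multiples is part of the definition.\<close>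
definition state_over_time :: "(nat \<Rightarrow> nat \<Rightarrow> qmap \<Rightarrow> cmat \<Rightarrow> cmat) \<Rightarrow> bool" where
  "state_over_time star \<longleftrightarrow>
     (\<forall>a b F \<rho>. channel a b F \<and> density a \<rho> \<longrightarrow>
        star a b F \<rho> \<in> carrier_mat (a * b) (a * b) \<and>
        ptrace_left a b (star a b F \<rho>) = F \<rho> \<and>
        ptrace_right a b (star a b F \<rho>) = \<rho> \<and>
        (\<forall>c. star a b (\<lambda>M. c \<cdot>\<^sub>m F M) \<rho> = c \<cdot>\<^sub>m star a b F \<rho> \<and>
             star a b F (c \<cdot>\<^sub>m \<rho>) = c \<cdot>\<^sub>m star a b F \<rho>))"

definition matsum :: "nat \<Rightarrow> nat \<Rightarrow> (nat \<Rightarrow> cmat) \<Rightarrow> cmat" where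
  "matsum n k f = foldr (\<lambda>i acc. f i + acc) [0..<k] (0\<^sub>m n n)"

text \<open>Process-linearity: linearity in the first argument on the (homogeneously extended)
 domain of scalar multiples of channels: whenever mu E = sum_i lambda_i E_i (as maps on B(A)),
 then mu (E \<star> \<rho>) = sum_i lambda_i (E_i \<star> \<rho>).\<close>
definition process_linear :: "(nat \<Rightarrow> nat \<Rightarrow> qmap \<Rightarrow> cmat \<Rightarrow> cmat) \<Rightarrow> bool" where
  "process_linear star \<longleftrightarrow>
     (\<forall>a b \<rho> k (lam :: nat \<Rightarrow> complex) Fs \<mu> E.
        density a \<rho> \<and> channel a b E \<and> (\<forall>i<k. channel a b (Fs i)) \<and>
        (\<forall>M \<in> carrier_mat a a. \<mu> \<cdot>\<^sub>m E M = matsum b k (\<lambda>i. lam i \<cdot>\<^sub>m Fs i M)) \<longrightarrow>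
        \<mu> \<cdot>\<^sub>m star a b E \<rho> = matsum (a * b) k (\<lambda>i. lam i \<cdot>\<^sub>m star a b (Fs i) \<rho>))"

text \<open>Quantum states over spacetime on A (x) E: density operators, or operators G \<star> \<sigma>
 with G : X -> Y and X (x) Y being A (x) E (in either order of the two factors).\<close>
definition state_over_spacetime ::
  "(nat \<Rightarrow> nat \<Rightarrow> qmap \<Rightarrow> cmat \<Rightarrow> cmat) \<Rightarrow> nat \<Rightarrow> nat \<Rightarrow> cmat \<Rightarrow> bool" where
  "state_over_spacetime star a e M \<longleftrightarrow>
     density (a * e) M \<or>
     (\<exists>G \<sigma>. channel a e G \<and> density a \<sigma> \<and> M = star a e G \<sigma>) \<or>
     (\<exists>G \<sigma>. channel e a G \<and> density e \<sigma> \<and> M = swap_sys e a (star e a G \<sigma>))"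

text \<open>Axiom (E) for star with extension ext: ext a b e F \<rho>_AE is F_{B|A} \<star> \<rho>_{AE}
 on A (x) B (x) E.  The extension agrees with star for the trivial environment (dim 1,
 A (x) C identified with A) and is homogeneous in both arguments.\<close>
definition axiomE ::
  "(nat \<Rightarrow> nat \<Rightarrow> qmap \<Rightarrow> cmat \<Rightarrow> cmat) \<Rightarrow> (nat \<Rightarrow> nat \<Rightarrow> nat \<Rightarrow> qmap \<Rightarrow> cmat \<Rightarrow> cmat) \<Rightarrow> bool" where
  "axiomE star ext \<longleftrightarrow>
     (\<forall>a b F \<rho>. channel a b F \<and> density a \<rho> \<longrightarrow> ext a b 1 F \<rho> = star a b F \<rho>) \<and>
     (\<forall>a b e F \<rho>. channel a b F \<and> state_over_spacetime star a e \<rho> \<longrightarrow>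
        ext a b e F \<rho> \<in> carrier_mat (a * b * e) (a * b * e) \<and>
        (\<forall>I. cp_trace_nonincreasing e e I \<longrightarrow>
            apply_right (a * b) e e I (ext a b e F \<rho>) = ext a b e F (apply_right a e e I \<rho>)) \<and>
        ptrace_left a (b * e) (ext a b e F \<rho>) = apply_left a b e F \<rho> \<and>
        (\<forall>c. ext a b e (\<lambda>M. c \<cdot>\<^sub>m F M) \<rho> = c \<cdot>\<^sub>m ext a b e F \<rho> \<and>
             ext a b e F (c \<cdot>\<^sub>m \<rho>) = c \<cdot>\<^sub>m ext a b e F \<rho>))"

text \<open>Axiom (P): Tr_B[F_{C|B} \<star> (E_{B|A} \<star> \<rho>_A)] = (F o E) \<star> \<rho>_A, where F acts on the
 B-part of E \<star> \<rho> (reordered to B (x) A) with spectator A; the result on C (x) A is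
 identified with A (x) C.\<close>
definition axiomP ::
  "(nat \<Rightarrow> nat \<Rightarrow> qmap \<Rightarrow> cmat \<Rightarrow> cmat) \<Rightarrow> (nat \<Rightarrow> nat \<Rightarrow> nat \<Rightarrow> qmap \<Rightarrow> cmat \<Rightarrow> cmat) \<Rightarrow> bool" where
  "axiomP star ext \<longleftrightarrow>
     (\<forall>a b c E F \<rho>. channel a b E \<and> channel b c F \<and> density a \<rho> \<longrightarrow>
        swap_sys c a (ptrace_left b (c * a) (ext b c a F (swap_sys a b (star a b E \<rho>))))
          = star a c (F \<circ> E) \<rho>)"

end

theory Submission
  imports Defs
begin

text \<open>By axiom (E), letting a channel F act on the B-part of E \<star> \<rho> and tracing out B gives
(F \<otimes> id_A)(E \<star> \<rho>); after reordering the factors, axiom (P) therefore says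
(id_A \<otimes> F)(E \<star> \<rho>) = (F \<circ> E) \<star> \<rho>.  Taking E = id gives the factorisation
E \<star> \<rho> = (id_A \<otimes> E)(id \<star> \<rho>); conversely, the factorisation reduces (P) to
(id_A \<otimes> F)(id_A \<otimes> E) = id_A \<otimes> (F \<circ> E).  As id_A \<otimes> E depends linearly on E, the
factorisation makes \<star> process-linear and extends it linearly to all linear maps.
Only axiom (E) is used, not the marginal conditions of a state over time.\<close>

lemma tensor_index_less:
  fixes x y n m :: nat
  assumes "x < n" "y < m"
  shows "x * m + y < n * m"
proof -
  have "Suc x * m \<le> n * m" using assms(1) by (intro mult_le_mono1) simp
  then show ?thesis using assms(2) by simp
qed

lemma tensor_index_split:
  fixes p n m :: nat
  assumes "p < n * m"
  shows "p div m < n" "p mod m < m"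
  using assms by (auto simp: less_mult_imp_div_less) (cases "m = 0"; simp)

definition tensor_block :: "nat \<Rightarrow> nat \<Rightarrow> nat \<Rightarrow> cmat \<Rightarrow> cmat" where
  "tensor_block a x y S = mat a a (\<lambda>(i, j). S $$ (x * a + i, y * a + j))"

lemma tensor_block_carrier [simp]: "tensor_block a x y S \<in> carrier_mat a a"
  by (simp add: tensor_block_def)

lemma apply_right_carrier [simp]: "apply_right e a b F S \<in> carrier_mat (e * b) (e * b)"
  by (simp add: apply_right_def)

lemma dim_apply_right [simp]:
  "dim_row (apply_right e a b F S) = e * b" "dim_col (apply_right e a b F S) = e * b"
  by (simp_all add: apply_right_def)

lemma apply_right_index:
  assumes "p < e * b" "q < e * b"
  shows "apply_right e a b F S $$ (p, q) = F (tensor_block a (p div b) (q div b) S) $$ (p mod b, q mod b)"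
  using assms by (simp add: apply_right_def tensor_block_def)

lemma tensor_block_apply_right:
  assumes E: "\<forall>M\<in>carrier_mat a a. E M \<in> carrier_mat b b" and "x < e" "y < e"
  shows "tensor_block b x y (apply_right e a b E S) = E (tensor_block a x y S)"
proof (rule eq_matI)
  fix i j assume "i < dim_row (E (tensor_block a x y S))" "j < dim_col (E (tensor_block a x y S))"
  then have "i < b" "j < b" using E by auto
  moreover have "x * b + i < e * b" "y * b + j < e * b"
    using \<open>i < b\<close> \<open>j < b\<close> assms(2,3) by (auto intro: tensor_index_less)
  ultimately show "tensor_block b x y (apply_right e a b E S) $$ (i, j) = E (tensor_block a x y S) $$ (i, j)"
    by (simp add: tensor_block_def apply_right_index)
qed (use E in \<open>auto simp: tensor_block_def\<close>)

lemma apply_right_comp: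
  assumes E: "\<forall>M\<in>carrier_mat a a. E M \<in> carrier_mat b b"
  shows "apply_right e b c F (apply_right e a b E S) = apply_right e a c (F \<circ> E) S"
proof (rule eq_matI)
  fix p q assume "p < dim_row (apply_right e a c (F \<circ> E) S)" "q < dim_col (apply_right e a c (F \<circ> E) S)"
  then have "p < e * c" "q < e * c" by auto
  then show "apply_right e b c F (apply_right e a b E S) $$ (p, q) = apply_right e a c (F \<circ> E) S $$ (p, q)"
    by (simp add: apply_right_index tensor_block_apply_right[OF E] tensor_index_split)
qed auto

lemma swap_apply_left_swap:
  "swap_sys b e (apply_left a b e F (swap_sys e a S)) = apply_right e a b F S"
proof (rule eq_matI)
  fix p q assume "p < dim_row (apply_right e a b F S)" "q < dim_col (apply_right e a b F S)"
  then have p: "p < e * b" and q: "q < e * b" by auto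
  have pe: "p div b < e" and qe: "q div b < e" using p q by (simp_all add: tensor_index_split)
  have "p mod b * e + p div b < b * e" "q mod b * e + q div b < b * e"
    using p q by (auto intro: tensor_index_less simp: tensor_index_split)
  moreover have "mat a a (\<lambda>(i, j). swap_sys e a S $$ (i * e + p div b, j * e + q div b))
      = tensor_block a (p div b) (q div b) S"
    using pe qe by (auto intro!: eq_matI simp: tensor_block_def swap_sys_def tensor_index_less)
  ultimately show "swap_sys b e (apply_left a b e F (swap_sys e a S)) $$ (p, q) = apply_right e a b F S $$ (p, q)"
    using p q pe qe by (simp add: swap_sys_def apply_left_def apply_right_index mult.commute[of b e])
qed (auto simp: swap_sys_def mult.commute)

lemma apply_left_id:
  assumes "M \<in> carrier_mat (a * k) (a * k)"
  shows "apply_left a a k id M = M"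
proof (rule eq_matI)
  fix i j assume "i < dim_row M" "j < dim_col M"
  then have "i < a * k" "j < a * k" using assms by auto
  then show "apply_left a a k id M $$ (i, j) = M $$ (i, j)"
    by (simp add: apply_left_def tensor_index_split)
qed (use assms in \<open>auto simp: apply_left_def\<close>)

lemma apply_left_comp:
  assumes E: "\<forall>M\<in>carrier_mat a a. E M \<in> carrier_mat b b"
  shows "apply_left a c k (F \<circ> E) M = apply_left b c k F (apply_left a b k E M)"
proof (rule eq_matI)
  fix p q assume "p < dim_row (apply_left b c k F (apply_left a b k E M))"
    "q < dim_col (apply_left b c k F (apply_left a b k E M))"
  then have p: "p < c * k" and q: "q < c * k" by (auto simp: apply_left_def)
  then have pk: "p mod k < k" and qk: "q mod k < k" by (simp_all add: tensor_index_split)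
  define X where "X = mat a a (\<lambda>(i, j). M $$ (i * k + p mod k, j * k + q mod k))"
  have EX: "E X \<in> carrier_mat b b" using E by (simp add: X_def)
  have "mat b b (\<lambda>(i, j). apply_left a b k E M $$ (i * k + p mod k, j * k + q mod k)) = E X"
  proof (rule eq_matI)
    fix i j assume "i < dim_row (E X)" "j < dim_col (E X)"
    then have "i < b" "j < b" using EX by auto
    moreover have "i * k + p mod k < b * k" "j * k + q mod k < b * k"
      using \<open>i < b\<close> \<open>j < b\<close> pk qk by (auto intro: tensor_index_less)
    ultimately show "mat b b (\<lambda>(i, j). apply_left a b k E M $$ (i * k + p mod k, j * k + q mod k)) $$ (i, j)
        = E X $$ (i, j)"
      using pk qk by (simp add: apply_left_def X_def)
  qed (use EX in auto)
  then show "apply_left a c k (F \<circ> E) M $$ (p, q) = apply_left b c k F (apply_left a b k E M) $$ (p, q)"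
    using p q by (simp add: apply_left_def X_def)
qed (simp_all add: apply_left_def)

lemma channel_carrier: "channel a b E \<Longrightarrow> \<forall>M\<in>carrier_mat a a. E M \<in> carrier_mat b b"
  by (simp add: channel_def linear_qmap_def)

lemma channel_id: "channel a a id"
proof -
  have "completely_positive a a id"
    unfolding completely_positive_def by (auto simp: psd_def apply_left_id)
  then show ?thesis by (simp add: channel_def linear_qmap_def)
qed

lemma channel_comp:
  assumes "channel a b E" "channel b c F"
  shows "channel a c (F \<circ> E)"
proof -
  have E: "\<forall>M\<in>carrier_mat a a. E M \<in> carrier_mat b b" using assms(1) by (rule channel_carrier)
  have "linear_qmap a c (F \<circ> E)"
    using assms unfolding channel_def linear_qmap_def by auto
  moreover have "completely_positive a c (F \<circ> E)"
    using assms unfolding channel_def completely_positive_def by (simp add: apply_left_comp[OF E])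
  moreover have "\<forall>M\<in>carrier_mat a a. trace ((F \<circ> E) M) = trace M"
    using assms E unfolding channel_def by auto
  ultimately show ?thesis by (simp add: channel_def)
qed

lemma apply_right_cong:
  assumes "\<And>M. M \<in> carrier_mat a a \<Longrightarrow> F M = G M"
  shows "apply_right e a b F S = apply_right e a b G S"
  by (rule eq_matI) (simp_all add: apply_right_index assms)

lemma apply_right_add:
  assumes F: "\<forall>M\<in>carrier_mat a a. F M \<in> carrier_mat b b"
    and G: "\<forall>M\<in>carrier_mat a a. G M \<in> carrier_mat b b"
  shows "apply_right e a b (\<lambda>M. F M + G M) S = apply_right e a b F S + apply_right e a b G S"
proof (rule eq_matI)
  fix p q assume "p < dim_row (apply_right e a b F S + apply_right e a b G S)"
    "q < dim_col (apply_right e a b F S + apply_right e a b G S)"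
  then have "p < e * b" "q < e * b" by auto
  moreover have "G (tensor_block a (p div b) (q div b) S) \<in> carrier_mat b b" using G by simp
  ultimately show "apply_right e a b (\<lambda>M. F M + G M) S $$ (p, q)
      = (apply_right e a b F S + apply_right e a b G S) $$ (p, q)"
    by (simp add: apply_right_index tensor_index_split)
qed auto

lemma apply_right_smult:
  assumes F: "\<forall>M\<in>carrier_mat a a. F M \<in> carrier_mat b b"
  shows "apply_right e a b (\<lambda>M. c \<cdot>\<^sub>m F M) S = c \<cdot>\<^sub>m apply_right e a b F S"
proof (rule eq_matI)
  fix p q assume "p < dim_row (c \<cdot>\<^sub>m apply_right e a b F S)" "q < dim_col (c \<cdot>\<^sub>m apply_right e a b F S)"
  then have "p < e * b" "q < e * b" by auto
  moreover have "F (tensor_block a (p div b) (q div b) S) \<in> carrier_mat b b" using F by simp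
  ultimately show "apply_right e a b (\<lambda>M. c \<cdot>\<^sub>m F M) S $$ (p, q) = (c \<cdot>\<^sub>m apply_right e a b F S) $$ (p, q)"
    by (simp add: apply_right_index tensor_index_split)
qed auto

lemma foldr_add_mat:
  assumes "\<forall>i\<in>set xs. f i \<in> carrier_mat n n"
  shows "foldr (\<lambda>i acc. f i + acc) xs (0\<^sub>m n n) \<in> carrier_mat n n \<and>
    (\<forall>p<n. \<forall>q<n. foldr (\<lambda>i acc. f i + acc) xs (0\<^sub>m n n) $$ (p, q) = (\<Sum>i\<leftarrow>xs. f i $$ (p, q)))"
  using assms by (induction xs) auto

lemma matsum_carrier: "\<forall>i<k. f i \<in> carrier_mat n n \<Longrightarrow> matsum n k f \<in> carrier_mat n n"
  using foldr_add_mat[of "[0..<k]" f n] by (simp add: matsum_def)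

lemma matsum_index:
  assumes "\<forall>i<k. f i \<in> carrier_mat n n" "p < n" "q < n"
  shows "matsum n k f $$ (p, q) = (\<Sum>i<k. f i $$ (p, q))"
  using foldr_add_mat[of "[0..<k]" f n] assms
  by (simp add: matsum_def interv_sum_list_conv_sum_set_nat lessThan_atLeast0)

lemma matsum_cong: "(\<And>i. i < k \<Longrightarrow> f i = g i) \<Longrightarrow> matsum n k f = matsum n k g"
  unfolding matsum_def by (intro foldr_cong) auto

lemma apply_right_matsum:
  assumes Fs: "\<forall>i<k. \<forall>M\<in>carrier_mat a a. Fs i M \<in> carrier_mat b b"
  shows "apply_right e a b (\<lambda>M. matsum b k (\<lambda>i. Fs i M)) S = matsum (e * b) k (\<lambda>i. apply_right e a b (Fs i) S)"
proof -
  have sum_carrier: "matsum (e * b) k (\<lambda>i. apply_right e a b (Fs i) S) \<in> carrier_mat (e * b) (e * b)"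
    by (rule matsum_carrier) simp
  show ?thesis
  proof (rule eq_matI)
    fix p q assume "p < dim_row (matsum (e * b) k (\<lambda>i. apply_right e a b (Fs i) S))"
      "q < dim_col (matsum (e * b) k (\<lambda>i. apply_right e a b (Fs i) S))"
    then have p: "p < e * b" and q: "q < e * b" using sum_carrier by auto
    then have pb: "p mod b < b" and qb: "q mod b < b" by (simp_all add: tensor_index_split)
    define X where "X = tensor_block a (p div b) (q div b) S"
    have FsX: "\<forall>i<k. Fs i X \<in> carrier_mat b b" using Fs by (simp add: X_def)
    have "apply_right e a b (\<lambda>M. matsum b k (\<lambda>i. Fs i M)) S $$ (p, q)
        = (\<Sum>i<k. Fs i X $$ (p mod b, q mod b))"
      using p q by (simp add: apply_right_index X_def[symmetric] matsum_index[OF FsX pb qb])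
    also have "\<dots> = (\<Sum>i<k. apply_right e a b (Fs i) S $$ (p, q))"
      using p q by (simp add: apply_right_index X_def)
    also have "\<dots> = matsum (e * b) k (\<lambda>i. apply_right e a b (Fs i) S) $$ (p, q)"
      using p q by (simp add: matsum_index)
    finally show "apply_right e a b (\<lambda>M. matsum b k (\<lambda>i. Fs i M)) S $$ (p, q)
        = matsum (e * b) k (\<lambda>i. apply_right e a b (Fs i) S) $$ (p, q)" .
  qed (use sum_carrier in auto)
qed

lemma axiomE_ptrace_left:
  assumes "axiomE star ext" "channel a b F" "state_over_spacetime star a e \<rho>"
  shows "ptrace_left a (b * e) (ext a b e F \<rho>) = apply_left a b e F \<rho>"
  using assms(1)[unfolded axiomE_def, THEN conjunct2, rule_format, OF conjI[OF assms(2,3)]] by blast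

lemma state_over_spacetime_swap_star:
  "channel a b E \<Longrightarrow> density a \<rho> \<Longrightarrow> state_over_spacetime star b a (swap_sys a b (star a b E \<rho>))"
  unfolding state_over_spacetime_def by blast

lemma axiomP_lhs_eq_apply_right:
  assumes "axiomE star ext" "channel a b E" "channel b c F" "density a \<rho>"
  shows "swap_sys c a (ptrace_left b (c * a) (ext b c a F (swap_sys a b (star a b E \<rho>))))
    = apply_right a b c F (star a b E \<rho>)"
  using assms by (simp add: axiomE_ptrace_left state_over_spacetime_swap_star swap_apply_left_swap)

lemma axiomP_iff_apply_right:
  assumes "axiomE star ext"
  shows "axiomP star ext \<longleftrightarrow>
    (\<forall>a b c E F \<rho>. channel a b E \<and> channel b c F \<and> density a \<rho> \<longrightarrow>
       apply_right a b c F (star a b E \<rho>) = star a c (F \<circ> E) \<rho>)"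
proof -
  have "swap_sys c a (ptrace_left b (c * a) (ext b c a F (swap_sys a b (star a b E \<rho>)))) = star a c (F \<circ> E) \<rho>
      \<longleftrightarrow> apply_right a b c F (star a b E \<rho>) = star a c (F \<circ> E) \<rho>"
    if "channel a b E" "channel b c F" "density a \<rho>" for a b c E F \<rho>
    by (simp only: axiomP_lhs_eq_apply_right[OF assms that])
  then show ?thesis
    unfolding axiomP_def by blast
qed

definition factorises_through_id :: "(nat \<Rightarrow> nat \<Rightarrow> qmap \<Rightarrow> cmat \<Rightarrow> cmat) \<Rightarrow> bool" where
  "factorises_through_id star \<longleftrightarrow>
     (\<forall>a b E \<rho>. channel a b E \<and> density a \<rho> \<longrightarrow> star a b E \<rho> = apply_right a a b E (star a a id \<rho>))"

lemma axiomP_iff_factorises_through_id: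
  assumes "axiomE star ext"
  shows "axiomP star ext \<longleftrightarrow> factorises_through_id star"
proof
  assume "axiomP star ext"
  then have "apply_right a a b E (star a a id \<rho>) = star a b E \<rho>"
    if "channel a b E" "density a \<rho>" for a b E \<rho>
    using that channel_id[of a] unfolding axiomP_iff_apply_right[OF assms] by fastforce
  then show "factorises_through_id star"
    unfolding factorises_through_id_def by simp
next
  assume fac: "factorises_through_id star"
  have "apply_right a b c F (star a b E \<rho>) = star a c (F \<circ> E) \<rho>"
    if "channel a b E" "channel b c F" "density a \<rho>" for a b c E F \<rho>
  proof -
    have "apply_right a b c F (star a b E \<rho>) = apply_right a b c F (apply_right a a b E (star a a id \<rho>))"
      using fac that unfolding factorises_through_id_def by simp
    also have "\<dots> = apply_right a a c (F \<circ> E) (star a a id \<rho>)"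
      using that(1) by (simp add: apply_right_comp channel_carrier)
    also have "\<dots> = star a c (F \<circ> E) \<rho>"
      using fac that channel_comp unfolding factorises_through_id_def by metis
    finally show ?thesis .
  qed
  then show "axiomP star ext"
    unfolding axiomP_iff_apply_right[OF assms] by blast
qed

lemma factorises_through_id_process_linear:
  assumes fac: "factorises_through_id star"
  shows "process_linear star"
  unfolding process_linear_def
proof (intro allI impI, elim conjE)
  fix a b \<rho> k and lam :: "nat \<Rightarrow> complex" and Fs \<mu> E
  assume \<rho>: "density a \<rho>" and E: "channel a b E" and Fs: "\<forall>i<k. channel a b (Fs i)"
    and comb: "\<forall>M\<in>carrier_mat a a. \<mu> \<cdot>\<^sub>m E M = matsum b k (\<lambda>i. lam i \<cdot>\<^sub>m Fs i M)"
  define S where "S = star a a id \<rho>"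
  have star_eq: "star a b F \<rho> = apply_right a a b F S" if "channel a b F" for F
    using fac \<rho> that unfolding factorises_through_id_def S_def by blast
  have "\<mu> \<cdot>\<^sub>m star a b E \<rho> = apply_right a a b (\<lambda>M. \<mu> \<cdot>\<^sub>m E M) S"
    using E by (simp add: star_eq apply_right_smult channel_carrier)
  also have "\<dots> = apply_right a a b (\<lambda>M. matsum b k (\<lambda>i. lam i \<cdot>\<^sub>m Fs i M)) S"
    using comb by (intro apply_right_cong) simp
  also have "\<dots> = matsum (a * b) k (\<lambda>i. apply_right a a b (\<lambda>M. lam i \<cdot>\<^sub>m Fs i M) S)"
    using Fs by (intro apply_right_matsum) (auto dest!: channel_carrier)
  also have "\<dots> = matsum (a * b) k (\<lambda>i. lam i \<cdot>\<^sub>m star a b (Fs i) \<rho>)"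
    using Fs by (intro matsum_cong) (simp add: star_eq apply_right_smult[OF channel_carrier])
  finally show "\<mu> \<cdot>\<^sub>m star a b E \<rho> = matsum (a * b) k (\<lambda>i. lam i \<cdot>\<^sub>m star a b (Fs i) \<rho>)" .
qed

lemma apply_right_linear_combination:
  assumes "linear_qmap a b F" "linear_qmap a b G"
  shows "apply_right e a b (\<lambda>M. \<alpha> \<cdot>\<^sub>m F M + \<beta> \<cdot>\<^sub>m G M) S
    = \<alpha> \<cdot>\<^sub>m apply_right e a b F S + \<beta> \<cdot>\<^sub>m apply_right e a b G S"
  using assms by (simp add: linear_qmap_def apply_right_add apply_right_smult)

theorem proposition2:
  fixes star :: "nat \<Rightarrow> nat \<Rightarrow> qmap \<Rightarrow> cmat \<Rightarrow> cmat"
    and ext :: "nat \<Rightarrow> nat \<Rightarrow> nat \<Rightarrow> qmap \<Rightarrow> cmat \<Rightarrow> cmat"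
  assumes "state_over_time star"
    and "axiomE star ext"
  shows "(axiomP star ext \<longleftrightarrow>
            (\<forall>a b E \<rho>. channel a b E \<and> density a \<rho> \<longrightarrow>
               star a b E \<rho> = apply_right a a b E (star a a id \<rho>)))
       \<and> ((\<forall>a b E \<rho>. channel a b E \<and> density a \<rho> \<longrightarrow>
               star a b E \<rho> = apply_right a a b E (star a a id \<rho>)) \<longrightarrow>
            process_linear star \<and>
            (\<forall>a b \<rho> F G (\<alpha> :: complex) \<beta>. density a \<rho> \<and> linear_qmap a b F \<and> linear_qmap a b G \<longrightarrow>
               apply_right a a b (\<lambda>M. \<alpha> \<cdot>\<^sub>m F M + \<beta> \<cdot>\<^sub>m G M) (star a a id \<rho>)
                 = \<alpha> \<cdot>\<^sub>m apply_right a a b F (star a a id \<rho>) + \<beta> \<cdot>\<^sub>m apply_right a a b G (star a a id \<rho>)))"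
  using axiomP_iff_factorises_through_id[OF assms(2)] factorises_through_id_process_linear
    apply_right_linear_combination
  unfolding factorises_through_id_def by blast

end
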